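(* Let $A,B$ be Hermitian operators on $\mathbb{C}^2$ with $AB\neq BA$. Then the KD distribution of $(A,B)$ distinguishes all states: for density operators $\rho,\rho'$ on $\mathbb{C}^2$, $\rho=\rho'$ if and only if $K^{A,B}_\rho=K^{A,B}_{\rho'}$ as distributions on $\mathbb{R}^2$.
   Context: A density operator is a positive semidefinite trace-one operator. Kirkwood–Dirac (KD) distribution: for Hermitian operators $A_1,\dots,A_n$ on $\mathbb{C}^N$ and a density operator $\rho$, define the operator-valued tempered distribution $\#^{K}_{A_1,\dots,A_n}(x)=(2\pi)^{-n}\int_{\mathbb{R}^n} e^{-is_1A_1}\cdots e^{-is_nA_n}\,e^{i s\cdot x}\,d^ns$ (inverse Fourier transform in the distributional sense), and $K^{A_1,\dots,A_n}_\rho(x)=\mathrm{Tr}[\#^{K}_{A_1,\dots,A_n}(x)\,\rho]$. *)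

theory Defs
  imports "HOL-Analysis.Analysis"
begin

definition adjoint_mat :: "complex^'n^'n \<Rightarrow> complex^'n^'n" where
  "adjoint_mat M = (\<chi> i j. cnj (M $ j $ i))"

definition hermitian_mat :: "complex^'n^'n \<Rightarrow> bool" where
  "hermitian_mat M \<longleftrightarrow> adjoint_mat M = M"

definition psd_mat :: "complex^'n^'n \<Rightarrow> bool" where
  "psd_mat M \<longleftrightarrow> (\<forall>v::complex^'n.
     Im (\<Sum>i\<in>UNIV. cnj (v $ i) * (M *v v) $ i) = 0 \<and>
     0 \<le> Re (\<Sum>i\<in>UNIV. cnj (v $ i) * (M *v v) $ i))"

definition density_operator :: "complex^'n^'n \<Rightarrow> bool" where
  "density_operator \<rho> \<longleftrightarrow> psd_mat \<rho> \<and> trace \<rho> = 1"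

definition mat_scale :: "complex \<Rightarrow> complex^'n^'n \<Rightarrow> complex^'n^'n" where
  "mat_scale c M = (\<chi> i j. c * M $ i $ j)"

fun mat_pow :: "complex^'n^'n \<Rightarrow> nat \<Rightarrow> complex^'n^'n" where
  "mat_pow M 0 = mat 1"
| "mat_pow M (Suc k) = M ** mat_pow M k"

definition mat_exp :: "complex^'n^'n \<Rightarrow> complex^'n^'n" where
  "mat_exp M = (\<Sum>k. (1 / fact k) *\<^sub>R mat_pow M k)"

definition partial_deriv :: "'n \<Rightarrow> (real^'n \<Rightarrow> complex) \<Rightarrow> real^'n \<Rightarrow> complex" where
  "partial_deriv i f x = vector_derivative (\<lambda>t. f (x + t *\<^sub>R axis i 1)) (at 0)"

fun Ck_fun :: "nat \<Rightarrow> (real^'n \<Rightarrow> complex) \<Rightarrow> bool" where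
  "Ck_fun 0 f \<longleftrightarrow> continuous_on UNIV f"
| "Ck_fun (Suc k) f \<longleftrightarrow> continuous_on UNIV f \<and>
     (\<forall>i x. (\<lambda>t. f (x + t *\<^sub>R axis i 1)) differentiable (at 0)) \<and>
     (\<forall>i. Ck_fun k (partial_deriv i f))"

definition smooth_fun :: "(real^'n \<Rightarrow> complex) \<Rightarrow> bool" where
  "smooth_fun f \<longleftrightarrow> (\<forall>k. Ck_fun k f)"

definition test_function :: "(real^'n \<Rightarrow> complex) \<Rightarrow> bool" where
  "test_function \<phi> \<longleftrightarrow> smooth_fun \<phi> \<and> (\<exists>R. \<forall>x. R < norm x \<longrightarrow> \<phi> x = 0)"

definition KD_char :: "complex^'n^'n \<Rightarrow> complex^'n^'n \<Rightarrow> complex^'n^'n \<Rightarrow> real^2 \<Rightarrow> complex" where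
  "KD_char A B \<rho> s = trace (mat_exp (mat_scale (- \<i> * complex_of_real (s $ 1)) A)
                        ** mat_exp (mat_scale (- \<i> * complex_of_real (s $ 2)) B) ** \<rho>)"

text \<open>The KD distribution K^{A,B}_\<rho>, as a distribution on R^2: its pairing with a test
  function \<phi> is that of the inverse Fourier transform of KD_char, i.e.
  (2\<pi>)^{-2} \<integral> KD_char(s) (\<integral> e^{i s\<cdot>x} \<phi>(x) dx) ds.\<close>
definition KD_dist :: "complex^'n^'n \<Rightarrow> complex^'n^'n \<Rightarrow> complex^'n^'n \<Rightarrow> (real^2 \<Rightarrow> complex) \<Rightarrow> complex" where
  "KD_dist A B \<rho> \<phi> = complex_of_real (1 / (2 * pi)^2) *
     (LINT s|lborel. KD_char A B \<rho> s *
        (LINT x|lborel. exp (\<i> * complex_of_real (s \<bullet> x)) * \<phi> x))"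

end

theory Submission
  imports Defs "HOL-Computational_Algebra.Polynomial" "HOL-Probability.Characteristic_Functions"
    "HOL-Probability.Sinc_Integral"
begin

text \<open>Write \<open>A = a1 P1 + a2 P2\<close> and \<open>B = b1 Q1 + b2 Q2\<close> spectrally. Since \<open>A\<close> and \<open>B\<close>
  do not commute, neither is scalar, so \<open>a1 \<noteq> a2\<close> and \<open>b1 \<noteq> b2\<close>. The KD characteristic
  function is then \<open>\<Sum>\<^sub>i\<^sub>j exp (-i s1 ai) exp (-i s2 bj) Tr[Pi Qj \<rho>]\<close>, so pairing the KD
  distribution with a product test function \<open>h(x1) q(x2)\<close> gives
  \<open>(2\<pi>)\<^sup>-\<^sup>2 \<Sum>\<^sub>i\<^sub>j J h ai \<cdot> J q bj \<cdot> Tr[Pi Qj \<rho>]\<close>, where \<open>J h a = \<integral> exp (-i t a) \<hat>h(t) dt\<close>.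
  Letting \<open>h\<close> and \<open>q\<close> run through modulated translates of one bump function, for which \<open>J\<close>
  does not vanish identically, separates the four coefficients, so equal KD distributions force
  \<open>Tr[Pi Qj \<rho>] = Tr[Pi Qj \<rho>']\<close>. Hence the traceless Hermitian matrix \<open>\<rho> - \<rho>'\<close> is
  trace-orthogonal to \<open>A\<close>, \<open>B\<close> and \<open>AB\<close>. In Pauli coordinates these are three linear equations
  whose determinant is the squared norm of the cross product of the Bloch vectors of \<open>A\<close> and
  \<open>B\<close>, which is non-zero exactly because \<open>AB \<noteq> BA\<close>.\<close>

definition mat2 :: "'a \<Rightarrow> 'a \<Rightarrow> 'a \<Rightarrow> 'a \<Rightarrow> 'a^2^2" where
  "mat2 a b c d = (\<chi> i j. if i = 1 then (if j = 1 then a else b) else (if j = 1 then c else d))"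

lemma mat2_nth [simp]:
  "mat2 a b c d $ 1 $ 1 = a" "mat2 a b c d $ 1 $ 2 = b"
  "mat2 a b c d $ 2 $ 1 = c" "mat2 a b c d $ 2 $ 2 = d"
  by (simp_all add: mat2_def)

lemma mat2_eta: "M = mat2 (M$1$1) (M$1$2) (M$2$1) (M$2$2)"
  unfolding vec_eq_iff forall_2 by simp

lemma mat2_eq_iff: "mat2 a b c d = mat2 a' b' c' d' \<longleftrightarrow> a = a' \<and> b = b' \<and> c = c' \<and> d = d'"
  by (metis mat2_nth)

lemma mat2_mult:
  fixes a b c d :: "'a::semiring_1"
  shows "mat2 a b c d ** mat2 a' b' c' d' =
    mat2 (a*a' + b*c') (a*b' + b*d') (c*a' + d*c') (c*b' + d*d')"
  unfolding vec_eq_iff forall_2 by (simp add: matrix_matrix_mult_def sum_2)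

lemma mat2_add: "mat2 a b c d + mat2 a' b' c' d' = mat2 (a+a') (b+b') (c+c') (d+d')"
  unfolding vec_eq_iff forall_2 by simp

lemma mat2_diff: "mat2 a b c d - mat2 a' b' c' d' = mat2 (a-a') (b-b') (c-c') (d-d')"
  unfolding vec_eq_iff forall_2 by simp

lemma mat2_one: "mat 1 = mat2 1 0 0 1"
  unfolding vec_eq_iff forall_2 by (simp add: mat_def)

lemma mat2_zero: "0 = mat2 0 0 0 0"
  unfolding vec_eq_iff forall_2 by simp

lemma trace_mat2: "trace (mat2 a b c d) = a + d"
  by (simp add: trace_def sum_2)

lemma mat_scale_mat2: "mat_scale x (mat2 a b c d) = mat2 (x*a) (x*b) (x*c) (x*d)"
  unfolding vec_eq_iff forall_2 by (simp add: mat_scale_def)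

lemma mat_scale_mult_left: "mat_scale c X ** Y = mat_scale c (X ** Y)"
  by (simp add: vec_eq_iff mat_scale_def matrix_matrix_mult_def sum_distrib_left mult.assoc)

lemma mat_scale_mult_right: "X ** mat_scale c Y = mat_scale c (X ** Y)"
  by (simp add: vec_eq_iff mat_scale_def matrix_matrix_mult_def sum_distrib_left algebra_simps)

lemma mat_scale_mat_scale: "mat_scale c (mat_scale d X) = mat_scale (c * d) X"
  by (simp add: vec_eq_iff mat_scale_def)

lemma mat_scale_1: "mat_scale 1 X = X"
  by (simp add: vec_eq_iff mat_scale_def)

lemma trace_mat_scale: "trace (mat_scale c X) = c * trace X"
  by (simp add: trace_def mat_scale_def sum_distrib_left)

lemma matrix_add_rdistrib: "(X + Y) ** Z = X ** Z + Y ** (Z :: 'a::semiring_1^'n^'n)"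
  by (simp add: vec_eq_iff matrix_matrix_mult_def distrib_right sum.distrib)

lemma matrix_diff_ldistrib: "Z ** (X - Y) = Z ** X - Z ** (Y :: 'a::ring_1^'n^'n)"
  by (simp add: vec_eq_iff matrix_matrix_mult_def right_diff_distrib sum_subtractf)

lemma mat_scale_one_commute: "mat_scale c (mat 1) ** B = B ** mat_scale c (mat 1)"
  for B :: "complex^'n^'n"
  by (simp only: mat_scale_mult_left mat_scale_mult_right matrix_mul_lid matrix_mul_rid)

lemma hermitian_mat_eq_mat2:
  assumes "hermitian_mat A"
  shows "A = mat2 (of_real (Re (A$1$1))) (A$1$2) (cnj (A$1$2)) (of_real (Re (A$2$2)))"
proof -
  have h: "cnj (A $ j $ i) = A $ i $ j" for i j
    using assms unfolding hermitian_mat_def adjoint_mat_def vec_eq_iff by auto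
  have "A$1$1 = of_real (Re (A$1$1))" "A$2$2 = of_real (Re (A$2$2))"
    using h[of 1 1] h[of 2 2] by (metis Reals_cnj_iff complex_is_Real_iff of_real_Re)+
  moreover have "A$2$1 = cnj (A$1$2)" using h[of 2 1] by (metis complex_cnj_cnj)
  ultimately show ?thesis by (subst mat2_eta) simp
qed

lemma psd_mat_imp_hermitian_mat:
  fixes M :: "complex^2^2"
  assumes "psd_mat M"
  shows "hermitian_mat M"
proof -
  define v where "v a b = ((\<chi> i. if i = 1 then a else b) :: complex^2)" for a b :: complex
  have quad: "(\<Sum>i\<in>UNIV. cnj (v a b $ i) * (M *v v a b) $ i) =
      cnj a * (M$1$1 * a + M$1$2 * b) + cnj b * (M$2$1 * a + M$2$2 * b)" for a b
    by (simp add: sum_2 v_def matrix_vector_mult_def)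
  have real: "Im (cnj a * (M$1$1 * a + M$1$2 * b) + cnj b * (M$2$1 * a + M$2$2 * b)) = 0" for a b
    using assms unfolding psd_mat_def quad[symmetric] by blast
  have "Im (M$1$1) = 0" "Im (M$2$2) = 0"
    using real[of 1 0] real[of 0 1] by simp_all
  moreover have "Im (M$1$2) + Im (M$2$1) = 0" "Re (M$1$2) - Re (M$2$1) = 0"
    using real[of 1 1] real[of 1 \<i>] calculation by simp_all
  ultimately show ?thesis
    unfolding hermitian_mat_def adjoint_mat_def vec_eq_iff forall_2 by (simp add: complex_eq_iff)
qed

section \<open>Spectral decomposition and the matrix exponential\<close>

lemma mat_pow_mat_scale_spectral:
  assumes "A ** P1 = mat_scale a1 P1" "A ** P2 = mat_scale a2 P2" "P1 + P2 = mat 1"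
  shows "mat_pow (mat_scale c A) k = mat_scale ((c*a1)^k) P1 + mat_scale ((c*a2)^k) P2"
proof (induction k)
  case 0
  then show ?case using assms(3) by (simp add: mat_scale_1)
next
  case (Suc k)
  then show ?case
    by (simp add: matrix_add_ldistrib mat_scale_mult_left mat_scale_mult_right assms
        mat_scale_mat_scale algebra_simps)
qed

lemma sums_vec_vec_nthI:
  fixes f :: "nat \<Rightarrow> 'a::real_normed_vector^'n^'m"
  assumes "\<And>i j. (\<lambda>k. f k $ i $ j) sums (L $ i $ j)"
  shows "f sums L"
proof -
  have "(\<lambda>n. \<chi> i j. \<Sum>k<n. f k $ i $ j) \<longlonglongrightarrow> (\<chi> i j. L $ i $ j)"
    using assms unfolding sums_def by (intro tendsto_vec_lambda) auto
  moreover have "(\<lambda>n. \<chi> i j. \<Sum>k<n. f k $ i $ j) = (\<lambda>n. \<Sum>k<n. f k)"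
    by (rule ext) (simp add: vec_eq_iff sum_component)
  ultimately show ?thesis unfolding sums_def by simp
qed

lemma mat_exp_mat_scale_spectral:
  assumes "A ** P1 = mat_scale a1 P1" "A ** P2 = mat_scale a2 P2" "P1 + P2 = mat 1"
  shows "mat_exp (mat_scale c A) = mat_scale (exp (c*a1)) P1 + mat_scale (exp (c*a2)) P2"
proof -
  have exp_sums: "(\<lambda>k. (c*a)^k / fact k) sums exp (c*a)" for a
    using exp_converges[of "c*a"] by (simp add: scaleR_conv_of_real divide_inverse mult.commute)
  have "(\<lambda>k. (1 / fact k) *\<^sub>R mat_pow (mat_scale c A) k) sums
      (mat_scale (exp (c*a1)) P1 + mat_scale (exp (c*a2)) P2)"
  proof (rule sums_vec_vec_nthI)
    fix i j
    have "((1 / fact k) *\<^sub>R mat_pow (mat_scale c A) k) $ i $ j =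
        (c*a1)^k / fact k * P1$i$j + (c*a2)^k / fact k * P2$i$j" for k
      unfolding mat_pow_mat_scale_spectral[OF assms] vector_scaleR_component
      by (simp add: mat_scale_def algebra_simps divide_inverse scaleR_conv_of_real)
    moreover have "(\<lambda>k. (c*a1)^k / fact k * P1$i$j + (c*a2)^k / fact k * P2$i$j) sums
        (exp (c*a1) * P1$i$j + exp (c*a2) * P2$i$j)"
      by (intro sums_add sums_mult2 exp_sums)
    ultimately show "(\<lambda>k. ((1 / fact k) *\<^sub>R mat_pow (mat_scale c A) k) $ i $ j) sums
        ((mat_scale (exp (c*a1)) P1 + mat_scale (exp (c*a2)) P2) $ i $ j)"
      by (simp add: mat_scale_def)
  qed
  then show ?thesis unfolding mat_exp_def by (rule sums_unique[symmetric])
qed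

text \<open>The spectral projections of \<open>A = m + (A - m)\<close> are \<open>(1 \<plusminus> (A - m)/r)/2\<close>, since
  \<open>(A - m)\<^sup>2 = r\<^sup>2\<close>.\<close>

lemma hermitian2_eigenprojections:
  fixes m d r :: real and z :: complex and A :: "complex^2^2"
  defines "P1 \<equiv> mat2 (of_real ((1 + d/r)/2)) (z / of_real (2*r)) (cnj z / of_real (2*r))
      (of_real ((1 - d/r)/2))"
  defines "P2 \<equiv> mat2 (of_real ((1 - d/r)/2)) (- z / of_real (2*r)) (- cnj z / of_real (2*r))
      (of_real ((1 + d/r)/2))"
  assumes A: "A = mat2 (of_real (m + d)) z (cnj z) (of_real (m - d))"
    and r: "r > 0" and r2: "r^2 = d^2 + (cmod z)^2"
  shows "A ** P1 = mat_scale (of_real (m + r)) P1"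
    and "A ** P2 = mat_scale (of_real (m - r)) P2"
    and "P1 + P2 = mat 1"
    and "A = mat_scale (of_real (m + r)) P1 + mat_scale (of_real (m - r)) P2"
proof -
  have zz: "z * cnj z = of_real (r^2 - d^2)"
    using r2 unfolding complex_norm_square[symmetric] by simp
  then have zz': "cnj z * z = of_real (r^2 - d^2)" by (simp add: mult.commute)
  have r0: "complex_of_real r \<noteq> 0" using \<open>r > 0\<close> by simp
  show "A ** P1 = mat_scale (of_real (m + r)) P1"
    "A ** P2 = mat_scale (of_real (m - r)) P2"
    unfolding A P1_def P2_def mat2_mult mat_scale_mat2 mat2_eq_iff using r0
    by (simp_all add: field_simps zz zz') (simp_all add: algebra_simps power2_eq_square)
  show "P1 + P2 = mat 1"
    "A = mat_scale (of_real (m + r)) P1 + mat_scale (of_real (m - r)) P2"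
    unfolding A P1_def P2_def mat2_add mat_scale_mat2 mat2_one mat2_eq_iff using r0
    by (simp_all add: field_simps)
qed

lemma hermitian2_spectral_decomposition:
  fixes A :: "complex^2^2"
  assumes "hermitian_mat A" "A ** B \<noteq> B ** A"
  obtains a1 a2 :: real and P1 P2
  where "a1 \<noteq> a2" "A ** P1 = mat_scale (of_real a1) P1" "A ** P2 = mat_scale (of_real a2) P2"
    "P1 + P2 = mat 1" "A = mat_scale (of_real a1) P1 + mat_scale (of_real a2) P2"
proof -
  define m d z where "m = (Re (A$1$1) + Re (A$2$2)) / 2" "d = (Re (A$1$1) - Re (A$2$2)) / 2"
    "z = A$1$2"
  define r where "r = sqrt (d^2 + (cmod z)^2)"
  have A: "A = mat2 (of_real (m + d)) z (cnj z) (of_real (m - d))"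
    using hermitian_mat_eq_mat2[OF assms(1)] unfolding m_d_z_def by (simp add: field_simps)
  have "r > 0"
  proof (rule ccontr)
    assume "\<not> r > 0"
    then have "d^2 + (cmod z)^2 \<le> 0" unfolding r_def by simp
    then have "d = 0" "z = 0" by (simp_all add: sum_power2_le_zero_iff)
    then have "A = mat_scale (of_real m) (mat 1)" unfolding A mat2_one mat_scale_mat2 by simp
    with assms(2) mat_scale_one_commute show False by metis
  qed
  moreover have "r^2 = d^2 + (cmod z)^2" unfolding r_def by simp
  ultimately show ?thesis
    using that[OF _ hermitian2_eigenprojections[OF A]] by simp
qed

section \<open>A density operator is determined by its traces against \<open>P\<^sub>iQ\<^sub>j\<close>\<close>

lemma orthogonal_to_cross_triple_eq_0:
  fixes na nb nc ma mb mc xa xb xc :: real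
  assumes "ka = nb*mc - nc*mb" "kb = nc*ma - na*mc" "kc = na*mb - nb*ma"
    and "na*xa + nb*xb + nc*xc = 0" "ma*xa + mb*xb + mc*xc = 0" "ka*xa + kb*xb + kc*xc = 0"
    and "(ka, kb, kc) \<noteq> (0, 0, 0)"
  shows "xa = 0 \<and> xb = 0 \<and> xc = 0"
proof -
  let ?N = "ka^2 + kb^2 + kc^2"
  have "ka^2 > 0 \<or> kb^2 > 0 \<or> kc^2 > 0" using assms(7) by auto
  then have "?N > 0" using zero_le_power2[of ka] zero_le_power2[of kb] zero_le_power2[of kc] by linarith
  moreover
  \<comment> \<open>Cramer's rule: the inverse of the matrix with rows \<open>n, m, n \<times> m\<close> has the columns
      \<open>m \<times> k, k \<times> n, k\<close> divided by \<open>|k|\<^sup>2\<close>, where \<open>k = n \<times> m\<close>.\<close>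
  have "?N * xa = (na*xa + nb*xb + nc*xc) * (mb*kc - mc*kb) + (ma*xa + mb*xb + mc*xc) * (kb*nc - kc*nb)
      + (ka*xa + kb*xb + kc*xc) * ka"
    "?N * xb = (na*xa + nb*xb + nc*xc) * (mc*ka - ma*kc) + (ma*xa + mb*xb + mc*xc) * (kc*na - ka*nc)
      + (ka*xa + kb*xb + kc*xc) * kb"
    "?N * xc = (na*xa + nb*xb + nc*xc) * (ma*kb - mb*ka) + (ma*xa + mb*xb + mc*xc) * (ka*nb - kb*na)
      + (ka*xa + kb*xb + kc*xc) * kc"
    unfolding assms(1-3) by (simp_all add: algebra_simps power2_eq_square)
  ultimately show ?thesis using assms(4-6) by auto
qed

lemma traceless_hermitian2_eq_0:
  fixes a1 a2 b1 b2 d :: real and z w e :: complex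
  defines "A \<equiv> mat2 (of_real a1) z (cnj z) (of_real a2)"
    and "B \<equiv> mat2 (of_real b1) w (cnj w) (of_real b2)"
    and "D \<equiv> mat2 (of_real d) e (cnj e) (- of_real d)"
  assumes "A ** B \<noteq> B ** A"
    and "trace (A ** D) = 0" "trace (B ** D) = 0" "trace (A ** B ** D) = 0"
  shows "D = 0"
proof -
  obtain p q where z: "z = Complex p q" by (cases z)
  obtain p' q' where w: "w = Complex p' q'" by (cases w)
  obtain u v where e: "e = Complex u v" by (cases e)
  define ha hb where "ha = (a1 - a2) / 2" "hb = (b1 - b2) / 2"
  have "ha * d + p * u + q * v = 0"
    using assms(5) unfolding A_def D_def z e mat2_mult trace_mat2 ha_hb_def
    by (simp add: complex_eq_iff field_simps)
  moreover have "hb * d + p' * u + q' * v = 0"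
    using assms(6) unfolding B_def D_def w e mat2_mult trace_mat2 ha_hb_def
    by (simp add: complex_eq_iff field_simps)
  moreover have "(p * q' - q * p') * d + (q * hb - ha * q') * u + (ha * p' - p * hb) * v = 0"
    using assms(7) unfolding A_def B_def D_def z w e mat2_mult trace_mat2 ha_hb_def
    by (simp add: complex_eq_iff field_simps)
  moreover have "(p * q' - q * p', q * hb - ha * q', ha * p' - p * hb) \<noteq> (0, 0, 0)"
  proof
    assume "(p * q' - q * p', q * hb - ha * q', ha * p' - p * hb) = (0, 0, 0)"
    then have "p * q' = q * p'" "q * (b1 - b2) = (a1 - a2) * q'" "(a1 - a2) * p' = p * (b1 - b2)"
      by (auto simp: ha_hb_def field_simps)
    then have "A ** B = B ** A"
      unfolding A_def B_def z w mat2_mult mat2_eq_iff by (simp add: complex_eq_iff algebra_simps)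
    with assms(4) show False by simp
  qed
  ultimately have "d = 0 \<and> u = 0 \<and> v = 0"
    using orthogonal_to_cross_triple_eq_0[where na=ha and nb=p and nc=q and ma=hb and mb="p'"
        and mc=q' and xa=d and xb=u and xc=v, OF refl refl refl]
    by (simp add: algebra_simps)
  then have "d = 0" "e = 0" using e by (simp_all add: complex_eq_iff)
  then show ?thesis unfolding D_def by (simp add: mat2_zero)
qed

lemma density_operator_diff_eq_mat2:
  fixes \<rho> \<rho>' :: "complex^2^2"
  assumes "density_operator \<rho>" "density_operator \<rho>'"
  obtains d e where "\<rho> - \<rho>' = mat2 (of_real d) e (cnj e) (- of_real d)"
proof -
  have \<rho>: "\<rho> = mat2 (of_real (Re (\<rho>$1$1))) (\<rho>$1$2) (cnj (\<rho>$1$2)) (of_real (Re (\<rho>$2$2)))"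
    and \<rho>': "\<rho>' = mat2 (of_real (Re (\<rho>'$1$1))) (\<rho>'$1$2) (cnj (\<rho>'$1$2)) (of_real (Re (\<rho>'$2$2)))"
    using assms psd_mat_imp_hermitian_mat hermitian_mat_eq_mat2
    unfolding density_operator_def by blast+
  have "Re (\<rho>$1$1) + Re (\<rho>$2$2) = 1"
    using assms(1) unfolding density_operator_def by (subst (asm) \<rho>) (simp add: trace_mat2 complex_eq_iff)
  moreover have "Re (\<rho>'$1$1) + Re (\<rho>'$2$2) = 1"
    using assms(2) unfolding density_operator_def by (subst (asm) \<rho>') (simp add: trace_mat2 complex_eq_iff)
  ultimately have "\<rho> - \<rho>' = mat2 (of_real (Re (\<rho>$1$1) - Re (\<rho>'$1$1))) (\<rho>$1$2 - \<rho>'$1$2)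
      (cnj (\<rho>$1$2 - \<rho>'$1$2)) (- of_real (Re (\<rho>$1$1) - Re (\<rho>'$1$1)))"
    by (subst \<rho>, subst \<rho>') (simp add: mat2_diff mat2_eq_iff complex_eq_iff)
  then show ?thesis by (rule that)
qed

lemma density_operator_eq_if_spectral_traces_eq:
  fixes A B \<rho> \<rho>' P1 P2 Q1 Q2 :: "complex^2^2"
  assumes "hermitian_mat A" "hermitian_mat B" "A ** B \<noteq> B ** A"
    and "density_operator \<rho>" "density_operator \<rho>'"
    and A: "A = mat_scale a1 P1 + mat_scale a2 P2" "P1 + P2 = mat 1"
    and B: "B = mat_scale b1 Q1 + mat_scale b2 Q2" "Q1 + Q2 = mat 1"
    and eq: "\<And>X Y. X \<in> {P1, P2} \<Longrightarrow> Y \<in> {Q1, Q2} \<Longrightarrow> trace (X ** Y ** \<rho>) = trace (X ** Y ** \<rho>')"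
  shows "\<rho> = \<rho>'"
proof -
  obtain d e where D: "\<rho> - \<rho>' = mat2 (of_real d) e (cnj e) (- of_real d)"
    using density_operator_diff_eq_mat2[OF assms(4,5)] .
  define T where "T X Y = trace (X ** Y ** (\<rho> - \<rho>'))" for X Y :: "complex^2^2"
  have T0: "T X Y = 0" if "X \<in> {P1, P2}" "Y \<in> {Q1, Q2}" for X Y
    using eq[OF that] unfolding T_def matrix_diff_ldistrib trace_sub by simp
  have T_linear:
    "T (X + X') Y = T X Y + T X' Y" "T (mat_scale c X) Y = c * T X Y"
    "T X (Y + Y') = T X Y + T X Y'" "T X (mat_scale c Y) = c * T X Y" for X X' Y Y' c
    unfolding T_def
    by (simp_all add: matrix_add_rdistrib matrix_add_ldistrib trace_add mat_scale_mult_left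
        mat_scale_mult_right trace_mat_scale)
  have "T A (Q1 + Q2) = 0" "T (P1 + P2) B = 0" "T A B = 0"
    unfolding A(1) B(1) T_linear by (simp_all add: T0)
  then have tr: "trace (A ** (\<rho> - \<rho>')) = 0" "trace (B ** (\<rho> - \<rho>')) = 0"
    "trace (A ** B ** (\<rho> - \<rho>')) = 0"
    using A(2) B(2) by (simp_all add: T_def)
  obtain x y z where A': "A = mat2 (of_real x) z (cnj z) (of_real y)"
    using hermitian_mat_eq_mat2[OF assms(1)] by blast
  obtain x' y' w where B': "B = mat2 (of_real x') w (cnj w) (of_real y')"
    using hermitian_mat_eq_mat2[OF assms(2)] by blast
  have "mat2 (of_real d) e (cnj e) (- of_real d) = 0"
    by (rule traceless_hermitian2_eq_0[of x z y x' w y'])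
      (use assms(3) tr in \<open>simp_all only: A' B' D not_False_eq_True\<close>)
  then show ?thesis using D by simp
qed

section \<open>Smooth bump functions on the real line\<close>

text \<open>Differentiating \<open>bump m\<close> lowers the power of \<open>t(1-t)\<close> by two
  (\<open>bump_has_derivative\<close>), so the polynomial multiples of all \<open>bump m\<close> form a space closed
  under differentiation; \<open>bump 0\<close> is the usual smooth bump supported on \<open>[0,1]\<close>.\<close>

definition bump :: "nat \<Rightarrow> real \<Rightarrow> real" where
  "bump m t = (if 0 < t \<and> t < 1 then exp (-1 / (t*(1-t))) / (t*(1-t))^m else 0)"

definition bump_deriv_factor :: "nat \<Rightarrow> real \<Rightarrow> real" where
  "bump_deriv_factor m t = (1 - 2*t) * (1 - real m * (t*(1-t)))"

lemma bump_symmetric: "bump m (1 - t) = bump m t"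
  unfolding bump_def by (auto simp: algebra_simps)

lemma bump_nonneg: "bump m t \<ge> 0"
  unfolding bump_def by auto

lemma bump_pos: "0 < t \<Longrightarrow> t < 1 \<Longrightarrow> bump m t > 0"
  unfolding bump_def by auto

lemma bump_0_le_1: "bump 0 t \<le> 1"
  unfolding bump_def by auto

lemma bump_eq_power_mult_bump: "bump m t = (t*(1-t))^k * bump (m+k) t"
  unfolding bump_def by (auto simp: power_add field_simps)

lemma tendsto_exp_neg_inverse_div_power: "((\<lambda>u::real. exp (-1/u) / u^k) \<longlongrightarrow> 0) (at_right 0)"
proof -
  have "((\<lambda>u::real. (inverse u)^k / exp (inverse u)) \<longlongrightarrow> 0) (at_right 0)"
    by (rule filterlim_compose[OF tendsto_power_div_exp_0 filterlim_inverse_at_top_right])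
  moreover have "eventually (\<lambda>u::real. (inverse u)^k / exp (inverse u) = exp (-1/u) / u^k) (at_right 0)"
    by (auto simp: exp_minus field_simps power_inverse intro!: eventually_mono[OF eventually_at_right_less])
  ultimately show ?thesis by (rule Lim_transform_eventually)
qed

lemma tendsto_bump_div: "((\<lambda>t. bump m t / t) \<longlongrightarrow> 0) (at_right 0)"
proof -
  define u where "u t = t * (1 - t)" for t :: real
  have "filterlim u (at_right 0) (at_right 0)"
  proof (rule tendsto_imp_filterlim_at_right)
    show "(u \<longlongrightarrow> 0) (at_right 0)" unfolding u_def by (auto intro!: tendsto_eq_intros)
    show "eventually (\<lambda>t. u t > 0) (at_right (0::real))"
      unfolding u_def by (rule eventually_at_rightI[of 0 1]) auto
  qed
  from filterlim_compose[OF tendsto_exp_neg_inverse_div_power this]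
  have lim: "((\<lambda>t. exp (-1/u t) / (u t)^(Suc m)) \<longlongrightarrow> 0) (at_right 0)" .
  have ev: "eventually (\<lambda>t. 0 < t \<and> t < 1) (at_right (0::real))"
    by (rule eventually_at_rightI[of 0 1]) auto
  show ?thesis
  proof (rule tendsto_sandwich[OF _ _ tendsto_const lim])
    show "eventually (\<lambda>t. 0 \<le> bump m t / t) (at_right 0)"
      using ev by eventually_elim (simp add: bump_nonneg)
    show "eventually (\<lambda>t. bump m t / t \<le> exp (-1/u t) / (u t)^(Suc m)) (at_right 0)"
      using ev
    proof eventually_elim
      case (elim t)
      then have ut: "0 < u t" "u t \<le> t" unfolding u_def by (auto simp: mult_le_cancel_left1)
      have "bump m t / t = exp (-1/u t) / ((u t)^m * t)" using elim unfolding bump_def u_def by simp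
      also have "\<dots> \<le> exp (-1/u t) / ((u t)^m * u t)"
        using ut by (intro divide_left_mono mult_left_mono mult_pos_pos) auto
      finally show ?case by (simp add: mult.commute)
    qed
  qed
qed

lemma bump_has_derivative_inside:
  assumes "0 < t" "t < 1"
  shows "((\<lambda>t. exp (-1 / (t*(1-t))) / (t*(1-t))^m) has_real_derivative
    bump (m+2) t * bump_deriv_factor m t) (at t)"
proof -
  define u where "u = t*(1-t)"
  have u: "u > 0" using assms unfolding u_def by simp
  have du: "((\<lambda>t. t*(1-t)) has_real_derivative (1 - 2*t)) (at t)"
    by (rule derivative_eq_intros refl)+ simp
  have "((\<lambda>t. inverse (t*(1-t))) has_real_derivative - ((1 - 2*t) * inverse (u^2))) (at t)"
    using DERIV_inverse_fun[OF du] u assms unfolding u_def by (simp add: power2_eq_square)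
  from DERIV_chain2[OF DERIV_exp DERIV_minus[OF this]]
  have dE: "((\<lambda>t. exp (-1 / (t*(1-t)))) has_real_derivative exp (-1/u) * ((1 - 2*t) / u^2)) (at t)"
    unfolding u_def by (simp add: divide_inverse)
  have dU: "((\<lambda>t. (t*(1-t))^m) has_real_derivative real m * u^(m - 1) * (1 - 2*t)) (at t)"
    using DERIV_chain2[OF DERIV_pow du, of m] unfolding u_def by (simp add: mult.commute)
  have "((exp (-1/u) * ((1 - 2*t) / u^2)) * u^m - exp (-1/u) * (real m * u^(m - 1) * (1 - 2*t)))
      / (u^m * u^m) = exp (-1/u) / u^(m+2) * ((1 - 2*t) * (1 - real m * u))"
    using u by (cases m) (simp_all add: field_simps power2_eq_square)
  with DERIV_divide[OF dE dU] u assms show ?thesis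
    unfolding bump_def bump_deriv_factor_def u_def by (simp add: power_add mult.commute)
qed

lemma bump_has_derivative_at_0: "(bump m has_real_derivative 0) (at 0)"
proof -
  have "((\<lambda>y. (bump m y - bump m 0) / (y - 0)) \<longlongrightarrow> 0) (at 0)"
    unfolding filterlim_at_split
  proof
    show "((\<lambda>y. (bump m y - bump m 0) / (y - 0)) \<longlongrightarrow> 0) (at_left 0)"
      by (rule tendsto_eventually, rule eventually_at_leftI[of "-1"]) (auto simp: bump_def)
    show "((\<lambda>y. (bump m y - bump m 0) / (y - 0)) \<longlongrightarrow> 0) (at_right 0)"
      using tendsto_bump_div[of m] by (simp add: bump_def)
  qed
  then show ?thesis by (simp add: has_field_derivative_iff)
qed

lemma bump_has_derivative: "(bump m has_real_derivative bump (m+2) t * bump_deriv_factor m t) (at t)"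
proof -
  have zero: "(bump m has_real_derivative 0) (at t)"
    if "t \<in> S" "open S" "\<And>x. x \<in> S \<Longrightarrow> x < 0 \<or> x > 1" for S
  proof -
    have "((\<lambda>_. 0) has_real_derivative 0) (at t)" by simp
    then show ?thesis
      by (rule has_field_derivative_transform_within_open[where S=S]) (use that in \<open>force simp: bump_def\<close>)+
  qed
  consider "t < 0" | "t = 0" | "0 < t \<and> t < 1" | "t = 1" | "t > 1" by linarith
  then show ?thesis
  proof cases
    case 1
    then show ?thesis using zero[of "{..<0}"] by (simp add: bump_def)
  next
    case 2
    then show ?thesis using bump_has_derivative_at_0 by (simp add: bump_def)
  next
    case 3
    then show ?thesis
      by (intro has_field_derivative_transform_within_open[OF bump_has_derivative_inside,
            where S="{0<..<1}"]) (auto simp: bump_def)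
  next
    case 4
    have reflect: "bump m = (\<lambda>t. bump m (1 - t))" by (simp add: bump_symmetric)
    have "((\<lambda>t. bump m (1 - t)) has_real_derivative 0 * (-1)) (at t)"
      by (rule DERIV_chain2) (use 4 bump_has_derivative_at_0 in \<open>auto intro!: derivative_eq_intros\<close>)
    then show ?thesis using 4 by (subst reflect) (simp add: bump_def)
  next
    case 5
    then show ?thesis using zero[of "{1<..}"] by (simp add: bump_def)
  qed
qed

lemma continuous_on_bump: "continuous_on UNIV (bump m)"
  by (metis DERIV_isCont continuous_at_imp_continuous_on bump_has_derivative)

text \<open>Every element of a derivative-closed space is \<open>C\<^sup>\<infinity>\<close>; conversely the \<open>C\<^sup>\<infinity>\<close>
  functions form such a space.\<close>

definition deriv_closed_space :: "(real \<Rightarrow> complex) set \<Rightarrow> bool" where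
  "deriv_closed_space F \<longleftrightarrow> (\<forall>g\<in>F. \<exists>g'\<in>F. \<forall>x. (g has_vector_derivative g' x) (at x)) \<and>
     (\<forall>f\<in>F. \<forall>g\<in>F. (\<lambda>x. f x + g x) \<in> F) \<and> (\<forall>c. \<forall>f\<in>F. (\<lambda>x. c * f x) \<in> F)"

definition smooth_real :: "(real \<Rightarrow> complex) \<Rightarrow> bool" where
  "smooth_real h \<longleftrightarrow> (\<exists>F. deriv_closed_space F \<and> h \<in> F)"

lemma smooth_real_derivative:
  assumes "smooth_real h"
  obtains h' where "smooth_real h'" "\<And>x. (h has_vector_derivative h' x) (at x)"
proof -
  obtain F where F: "deriv_closed_space F" "h \<in> F" using assms unfolding smooth_real_def by blast
  then obtain h' where "h' \<in> F" "\<And>x. (h has_vector_derivative h' x) (at x)"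
    unfolding deriv_closed_space_def by blast
  with F show ?thesis using that unfolding smooth_real_def by blast
qed

lemma smooth_real_continuous: "smooth_real h \<Longrightarrow> continuous_on UNIV h"
  by (metis smooth_real_derivative continuous_at_imp_continuous_on has_vector_derivative_continuous)

lemma smooth_real_image:
  assumes "smooth_real h"
    and deriv: "\<And>F f. deriv_closed_space F \<Longrightarrow> f \<in> F \<Longrightarrow>
      \<exists>g\<in>F. \<forall>x. (T f has_vector_derivative T g x) (at x)"
    and add: "\<And>f g. T (\<lambda>x. f x + g x) = (\<lambda>x. T f x + T g x)"
    and scale: "\<And>c f. T (\<lambda>x. c * f x) = (\<lambda>x. c * T f x)"
  shows "smooth_real (T h)"
proof -
  obtain F where F: "deriv_closed_space F" "h \<in> F" using assms(1) unfolding smooth_real_def by blast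
  have "deriv_closed_space (T ` F)"
    unfolding deriv_closed_space_def
  proof (intro conjI ballI allI)
    fix g assume "g \<in> T ` F"
    then show "\<exists>g'\<in>T ` F. \<forall>x. (g has_vector_derivative g' x) (at x)"
      using deriv[OF F(1)] by blast
  next
    fix f g assume "f \<in> T ` F" "g \<in> T ` F"
    then show "(\<lambda>x. f x + g x) \<in> T ` F"
      using F(1) unfolding deriv_closed_space_def by (auto simp: add[symmetric])
  next
    fix c f assume "f \<in> T ` F"
    then show "(\<lambda>x. c * f x) \<in> T ` F"
      using F(1) unfolding deriv_closed_space_def by (auto simp: scale[symmetric])
  qed
  with F(2) show ?thesis unfolding smooth_real_def by blast
qed

lemma smooth_real_translate: "smooth_real h \<Longrightarrow> smooth_real (\<lambda>x. h (x - \<mu>))"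
proof (erule smooth_real_image[where T="\<lambda>f x. f (x - \<mu>)"])
  fix F f assume "deriv_closed_space F" "f \<in> F"
  then obtain f' where f': "f' \<in> F" "\<And>x. (f has_vector_derivative f' x) (at x)"
    unfolding deriv_closed_space_def by metis
  have "((\<lambda>x. f (x - \<mu>)) has_vector_derivative f' (x - \<mu>)) (at x)" for x
  proof -
    have "((\<lambda>x. x - \<mu>) has_vector_derivative 1) (at x)" by (rule derivative_eq_intros refl)+ simp
    from vector_diff_chain_at[OF this f'(2)] show ?thesis by (simp add: o_def)
  qed
  with f'(1) show "\<exists>g\<in>F. \<forall>x. ((\<lambda>x. f (x - \<mu>)) has_vector_derivative g (x - \<mu>)) (at x)" by blast
qed auto

lemma has_vector_derivative_iexp_mult:
  "((\<lambda>x. iexp (\<xi> * x)) has_vector_derivative \<i> * of_real \<xi> * iexp (\<xi> * x)) (at x)"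
proof -
  have "((\<lambda>z. exp (\<i> * of_real \<xi> * z)) has_field_derivative
      \<i> * of_real \<xi> * exp (\<i> * of_real \<xi> * of_real x)) (at (of_real x))"
    by (rule derivative_eq_intros refl)+ simp
  from has_vector_derivative_real_field[OF this] show ?thesis by (simp add: mult.assoc)
qed

lemma smooth_real_modulate: "smooth_real h \<Longrightarrow> smooth_real (\<lambda>x. iexp (\<xi> * x) * h x)"
proof (erule smooth_real_image[where T="\<lambda>f x. iexp (\<xi> * x) * f x"])
  fix F f assume F: "deriv_closed_space F" and "f \<in> F"
  then obtain f' where f': "f' \<in> F" "\<And>x. (f has_vector_derivative f' x) (at x)"
    unfolding deriv_closed_space_def by metis
  let ?g = "\<lambda>x. f' x + \<i> * of_real \<xi> * f x"
  have "?g \<in> F"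
    using F f'(1) \<open>f \<in> F\<close> unfolding deriv_closed_space_def by (simp add: mult.assoc)
  moreover have "((\<lambda>x. iexp (\<xi> * x) * f x) has_vector_derivative iexp (\<xi> * x) * ?g x) (at x)" for x
  proof -
    have eq: "iexp (\<xi> * x) * f' x + \<i> * of_real \<xi> * iexp (\<xi> * x) * f x = iexp (\<xi> * x) * ?g x"
      by (simp add: algebra_simps)
    show ?thesis
      using has_vector_derivative_mult[OF has_vector_derivative_iexp_mult[of \<xi>] f'(2)[of x]] unfolding eq .
  qed
  ultimately show "\<exists>g\<in>F. \<forall>x. ((\<lambda>x. iexp (\<xi> * x) * f x) has_vector_derivative iexp (\<xi> * x) * g x) (at x)"
    by (intro bexI[of _ ?g]) auto
qed (auto simp: algebra_simps)

definition bump_poly_space :: "(real \<Rightarrow> complex) set" where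
  "bump_poly_space = {(\<lambda>t. poly p (of_real t) * of_real (bump m t)) | p m. True}"

lemma poly_t_one_minus_t: "poly [:0, 1, -1:] (of_real t) = of_real (t * (1 - t))"
  by (simp add: algebra_simps)

lemma has_vector_derivative_poly_bump:
  fixes p :: "complex poly"
  defines "u \<equiv> [:0, 1, -1:]"
  shows "((\<lambda>t. poly p (of_real t) * of_real (bump m t)) has_vector_derivative
    poly (pderiv p * u^2 + p * [:1, -2:] * ([:1:] - smult (of_nat m) u)) (of_real x) * of_real (bump (m+2) x))
    (at x)"
proof -
  have "((\<lambda>t. poly p (of_real t)) has_vector_derivative poly (pderiv p) (of_real x)) (at x)"
    by (rule has_vector_derivative_real_field) (rule poly_DERIV)
  moreover have "((\<lambda>t. complex_of_real (bump m t)) has_vector_derivative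
      of_real (bump (m+2) x * bump_deriv_factor m x)) (at x)"
    by (rule has_vector_derivative_of_real) (rule bump_has_derivative)
  ultimately have "((\<lambda>t. poly p (of_real t) * of_real (bump m t)) has_vector_derivative
      poly p (of_real x) * of_real (bump (m+2) x * bump_deriv_factor m x)
      + poly (pderiv p) (of_real x) * of_real (bump m x)) (at x)"
    by (rule has_vector_derivative_mult)
  moreover have "poly p (of_real x) * of_real (bump (m+2) x * bump_deriv_factor m x)
      + poly (pderiv p) (of_real x) * of_real (bump m x) =
      poly (pderiv p * u^2 + p * [:1, -2:] * ([:1:] - smult (of_nat m) u)) (of_real x) * of_real (bump (m+2) x)"
    unfolding u_def bump_deriv_factor_def bump_eq_power_mult_bump[of m x 2]
    by (simp add: poly_t_one_minus_t algebra_simps)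
  ultimately show ?thesis by simp
qed

lemma deriv_closed_space_bump_poly: "deriv_closed_space bump_poly_space"
  unfolding deriv_closed_space_def
proof (intro conjI ballI allI)
  fix g assume "g \<in> bump_poly_space"
  then obtain p m where g: "g = (\<lambda>t. poly p (of_real t) * of_real (bump m t))"
    unfolding bump_poly_space_def by auto
  define p' where "p' = pderiv p * [:0, 1, -1:]^2 + p * [:1, -2:] * ([:1:] - smult (of_nat m) [:0, 1, -1:])"
  have "(\<lambda>x. poly p' (of_real x) * of_real (bump (m+2) x)) \<in> bump_poly_space"
    unfolding bump_poly_space_def by blast
  moreover have "(g has_vector_derivative poly p' (of_real x) * of_real (bump (m+2) x)) (at x)" for x
    unfolding g p'_def by (rule has_vector_derivative_poly_bump)
  ultimately show "\<exists>g'\<in>bump_poly_space. \<forall>x. (g has_vector_derivative g' x) (at x)"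
    by (auto intro!: bexI[of _ "\<lambda>x. poly p' (of_real x) * of_real (bump (m+2) x)"])
next
  let ?u = "[:0, 1, -1:] :: complex poly"
  fix f g assume "f \<in> bump_poly_space" "g \<in> bump_poly_space"
  then obtain p m q k where f: "f = (\<lambda>t. poly p (of_real t) * of_real (bump m t))"
    and g: "g = (\<lambda>t. poly q (of_real t) * of_real (bump k t))"
    unfolding bump_poly_space_def by auto
  have "(\<lambda>x. f x + g x) = (\<lambda>t. poly (p * ?u^k + q * ?u^m) (of_real t) * of_real (bump (m+k) t))"
    unfolding f g using bump_eq_power_mult_bump[of m _ k] bump_eq_power_mult_bump[of k _ m]
    by (auto simp: poly_t_one_minus_t algebra_simps)
  then show "(\<lambda>x. f x + g x) \<in> bump_poly_space" unfolding bump_poly_space_def by blast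
next
  fix c f assume "f \<in> bump_poly_space"
  then obtain p m where "f = (\<lambda>t. poly p (of_real t) * of_real (bump m t))"
    unfolding bump_poly_space_def by auto
  then have "(\<lambda>x. c * f x) = (\<lambda>t. poly (smult c p) (of_real t) * of_real (bump m t))"
    by (simp add: algebra_simps)
  then show "(\<lambda>x. c * f x) \<in> bump_poly_space" unfolding bump_poly_space_def by blast
qed

definition std_bump :: "real \<Rightarrow> complex" where
  "std_bump t = of_real (bump 0 t)"

lemma smooth_real_std_bump: "smooth_real std_bump"
proof -
  have "std_bump = (\<lambda>t. poly [:1:] (of_real t) * of_real (bump 0 t))"
    by (simp add: std_bump_def fun_eq_iff)
  then have "std_bump \<in> bump_poly_space" unfolding bump_poly_space_def by blast
  then show ?thesis using deriv_closed_space_bump_poly unfolding smooth_real_def by blast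
qed

lemma has_vector_derivative_shift_at_0:
  assumes "\<And>y. (h has_vector_derivative h' y) (at y)"
  shows "((\<lambda>t. h (x + t)) has_vector_derivative h' x) (at 0)"
proof -
  have "((\<lambda>t. x + t) has_vector_derivative 1) (at 0)" by (rule derivative_eq_intros refl)+ simp
  from vector_diff_chain_at[OF this assms] show ?thesis by (simp add: o_def)
qed

lemma vec2_add_scaleR_axis_nth:
  "(x + t *\<^sub>R axis 1 1 :: real^2) $ 1 = x $ 1 + t" "(x + t *\<^sub>R axis 1 1 :: real^2) $ 2 = x $ 2"
  "(x + t *\<^sub>R axis 2 1 :: real^2) $ 1 = x $ 1" "(x + t *\<^sub>R axis 2 1 :: real^2) $ 2 = x $ 2 + t"
  by (simp_all add: axis_def)

lemma Ck_fun_tensor: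
  assumes "smooth_real h" "smooth_real q"
  shows "Ck_fun k (\<lambda>x::real^2. h (x$1) * q (x$2))"
  using assms
proof (induction k arbitrary: h q)
  case 0
  then show ?case
    by (auto intro!: continuous_on_mult continuous_on_compose2[OF smooth_real_continuous]
        continuous_intros)
next
  case (Suc k)
  obtain h' where h': "smooth_real h'" "\<And>x. (h has_vector_derivative h' x) (at x)"
    using smooth_real_derivative[OF Suc(2)] by blast
  obtain q' where q': "smooth_real q'" "\<And>x. (q has_vector_derivative q' x) (at x)"
    using smooth_real_derivative[OF Suc(3)] by blast
  let ?F = "\<lambda>x::real^2. h (x$1) * q (x$2)"
  have d1: "((\<lambda>t. ?F (x + t *\<^sub>R axis 1 1)) has_vector_derivative h' (x$1) * q (x$2)) (at 0)" for x
    unfolding vec2_add_scaleR_axis_nth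
    using has_vector_derivative_shift_at_0[OF h'(2), of "x$1"]
    by (rule derivative_eq_intros refl | simp)+
  have d2: "((\<lambda>t. ?F (x + t *\<^sub>R axis 2 1)) has_vector_derivative h (x$1) * q' (x$2)) (at 0)" for x
    unfolding vec2_add_scaleR_axis_nth
    using has_vector_derivative_shift_at_0[OF q'(2), of "x$2"]
    by (rule derivative_eq_intros refl | simp)+
  have "partial_deriv 1 ?F = (\<lambda>x. h' (x$1) * q (x$2))" "partial_deriv 2 ?F = (\<lambda>x. h (x$1) * q' (x$2))"
    unfolding partial_deriv_def by (rule ext, rule vector_derivative_at[OF d1])
      (rule ext, rule vector_derivative_at[OF d2])
  then have "\<forall>i. Ck_fun k (partial_deriv i ?F)"
    unfolding forall_2 using Suc.IH h'(1) q'(1) Suc.prems by auto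
  moreover have "\<forall>i x. (\<lambda>t. ?F (x + t *\<^sub>R axis i 1)) differentiable (at 0)"
    unfolding forall_2 using d1 d2 unfolding differentiable_def has_vector_derivative_def by blast
  moreover have "continuous_on UNIV ?F"
    using Suc.prems by (auto intro!: continuous_on_mult continuous_on_compose2[OF smooth_real_continuous]
        continuous_intros)
  ultimately show ?case by simp
qed

section \<open>Fourier transforms of test functions on the real line\<close>

definition test_function1 :: "(real \<Rightarrow> complex) \<Rightarrow> bool" where
  "test_function1 h \<longleftrightarrow> smooth_real h \<and> (\<exists>R. \<forall>x. R \<le> \<bar>x\<bar> \<longrightarrow> h x = 0)"

definition fourier :: "(real \<Rightarrow> complex) \<Rightarrow> real \<Rightarrow> complex" where
  "fourier h t = (LINT x|lborel. iexp (t * x) * h x)"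

definition phase :: "real \<Rightarrow> real \<Rightarrow> complex" where
  "phase t a = exp (- \<i> * of_real t * of_real a)"

text \<open>By Fourier inversion \<open>fourier_back h a = 2\<pi> h a\<close>; the argument below avoids the
  inversion theorem and only uses that \<open>fourier_back\<close> of one bump function is not identically
  zero.\<close>

definition fourier_back :: "(real \<Rightarrow> complex) \<Rightarrow> real \<Rightarrow> complex" where
  "fourier_back h a = (LINT t|lborel. phase t a * fourier h t)"

lemma test_function1_support:
  assumes "test_function1 h"
  obtains R where "R > 0" "\<And>x. R \<le> \<bar>x\<bar> \<Longrightarrow> h x = 0"
proof -
  obtain R where "\<And>x. R \<le> \<bar>x\<bar> \<Longrightarrow> h x = 0" using assms unfolding test_function1_def by auto
  then show ?thesis by (intro that[of "max R 1"]) auto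
qed

lemma test_function1_continuous: "test_function1 h \<Longrightarrow> continuous_on UNIV h"
  unfolding test_function1_def using smooth_real_continuous by blast

lemma vanishing_eq_indicator_scaleR:
  fixes f :: "real \<Rightarrow> 'a::real_vector"
  assumes "\<And>x. R \<le> \<bar>x\<bar> \<Longrightarrow> f x = 0"
  shows "f = (\<lambda>x. indicator {-R..R} x *\<^sub>R f x)"
proof
  fix x
  show "f x = indicator {-R..R} x *\<^sub>R f x"
    using assms[of x] by (cases "x \<in> {-R..R}") (auto simp: abs_if split: if_splits)
qed

lemma integrable_lborel_vanishing:
  fixes f :: "real \<Rightarrow> 'a::{banach, second_countable_topology}"
  assumes "continuous_on UNIV f" "\<And>x. R \<le> \<bar>x\<bar> \<Longrightarrow> f x = 0"
  shows "integrable lborel f"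
proof -
  have "integrable lborel (\<lambda>x. indicator {-R..R} x *\<^sub>R f x)"
    by (rule borel_integrable_compact) (auto intro: continuous_on_subset[OF assms(1)])
  also have "(\<lambda>x. indicator {-R..R} x *\<^sub>R f x) = f"
    by (rule vanishing_eq_indicator_scaleR[OF assms(2), symmetric])
  finally show ?thesis .
qed

lemma has_vector_derivative_vanishing:
  assumes "(h has_vector_derivative h') (at x)" "\<And>y. R \<le> \<bar>y\<bar> \<Longrightarrow> h y = (0::complex)" "R < \<bar>x\<bar>"
  shows "h' = 0"
proof -
  have "((\<lambda>_. 0::complex) has_vector_derivative 0) (at x)" by simp
  then have "(h has_vector_derivative 0) (at x)"
    by (rule has_vector_derivative_transform_within_open[where S="{y. R < \<bar>y\<bar>}"])
      (use assms in \<open>auto intro!: open_Collect_less continuous_intros\<close>)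
  then show ?thesis using assms(1) vector_derivative_unique_at by blast
qed

lemma test_function1_derivative:
  assumes "test_function1 h" "\<And>x. R \<le> \<bar>x\<bar> \<Longrightarrow> h x = 0"
  obtains h' where "test_function1 h'" "\<And>x. (h has_vector_derivative h' x) (at x)"
    "\<And>x. R + 1 \<le> \<bar>x\<bar> \<Longrightarrow> h' x = 0"
proof -
  obtain h' where h': "smooth_real h'" "\<And>x. (h has_vector_derivative h' x) (at x)"
    using assms(1) smooth_real_derivative unfolding test_function1_def by blast
  have zero: "h' x = 0" if "R + 1 \<le> \<bar>x\<bar>" for x
    by (rule has_vector_derivative_vanishing[OF h'(2) assms(2)]) (use that in auto)
  show ?thesis
    by (rule that[of h', OF _ h'(2) zero]) (use h'(1) zero in \<open>auto simp: test_function1_def\<close>)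
qed

lemma integrable_iexp_mult_test_function1:
  assumes "test_function1 h"
  shows "integrable lborel (\<lambda>x. iexp (t * x) * h x)"
proof -
  obtain R where "\<And>x. R \<le> \<bar>x\<bar> \<Longrightarrow> h x = 0" using test_function1_support[OF assms] by blast
  then show ?thesis
    by (intro integrable_lborel_vanishing[of _ R])
      (use test_function1_continuous[OF assms] in \<open>auto intro!: continuous_intros\<close>)
qed

lemma fourier_derivative:
  assumes "test_function1 h" "test_function1 h'" "\<And>x. (h has_vector_derivative h' x) (at x)"
  shows "fourier h' t = - \<i> * of_real t * fourier h t"
proof -
  obtain R where R: "R > 0" "\<And>x. R \<le> \<bar>x\<bar> \<Longrightarrow> h x = 0"
    using test_function1_support[OF assms(1)] by blast
  obtain R' where R': "R' > 0" "\<And>x. R' \<le> \<bar>x\<bar> \<Longrightarrow> h' x = 0"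
    using test_function1_support[OF assms(2)] by blast
  define M where "M = max R R'"
  define f where "f x = iexp (t * x) * h' x + \<i> * of_real t * iexp (t * x) * h x" for x
  have deriv: "((\<lambda>x. iexp (t * x) * h x) has_vector_derivative f x) (at x)" for x
    unfolding f_def by (rule has_vector_derivative_mult[OF has_vector_derivative_iexp_mult assms(3)])
  have cont: "continuous_on UNIV f"
    unfolding f_def using test_function1_continuous[OF assms(1)] test_function1_continuous[OF assms(2)]
    by (auto intro!: continuous_intros)
  have f_eq: "(\<lambda>x. indicator {-M..M} x *\<^sub>R f x) = f"
    by (rule vanishing_eq_indicator_scaleR[symmetric]) (use R(2) R'(2) in \<open>auto simp: f_def M_def\<close>)
  have "integral\<^sup>L lborel f = integral\<^sup>L lborel (\<lambda>x. indicator {-M..M} x *\<^sub>R f x)"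
    by (simp only: f_eq)
  also have "\<dots> = iexp (t * M) * h M - iexp (t * (-M)) * h (-M)"
    by (intro integral_FTC_atLeastAtMost) (use R(1) R'(1) deriv cont in
        \<open>auto simp: M_def intro: has_vector_derivative_at_within continuous_on_subset\<close>)
  also have "\<dots> = 0" using R(2)[of M] R(2)[of "-M"] unfolding M_def by auto
  finally have "integral\<^sup>L lborel f = 0" .
  moreover have "integral\<^sup>L lborel f = fourier h' t + \<i> * of_real t * fourier h t"
    unfolding f_def fourier_def
    using integrable_iexp_mult_test_function1[OF assms(1)] integrable_iexp_mult_test_function1[OF assms(2)]
    by (simp add: mult.assoc)
  ultimately show ?thesis by (simp add: algebra_simps) (metis add.commute add_eq_0_iff)
qed

lemma norm_fourier_le: "norm (fourier h t) \<le> (LINT x|lborel. norm (h x))"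
proof -
  have "norm (fourier h t) \<le> (LINT x|lborel. norm (iexp (t * x) * h x))"
    unfolding fourier_def by (rule integral_norm_bound)
  also have "\<dots> = (LINT x|lborel. norm (h x))" by (simp add: norm_mult)
  finally show ?thesis .
qed

lemma fourier_measurable:
  assumes "continuous_on UNIV h"
  shows "fourier h \<in> borel_measurable lborel"
proof -
  have [measurable]: "h \<in> borel_measurable borel" using assms by (rule borel_measurable_continuous_onI)
  show ?thesis unfolding fourier_def by measurable
qed

lemma integrable_fourier:
  assumes "test_function1 h"
  shows "integrable lborel (fourier h)"
proof -
  obtain R where R: "\<And>x. R \<le> \<bar>x\<bar> \<Longrightarrow> h x = 0" using test_function1_support[OF assms] by blast
  obtain h' where h': "test_function1 h'" "\<And>x. (h has_vector_derivative h' x) (at x)"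
      "\<And>x. R + 1 \<le> \<bar>x\<bar> \<Longrightarrow> h' x = 0"
    using test_function1_derivative[OF assms R] by blast
  obtain h'' where h'': "test_function1 h''" "\<And>x. (h' has_vector_derivative h'' x) (at x)"
    using test_function1_derivative[OF h'(1) h'(3)] by blast
  define C where "C = (LINT x|lborel. norm (h x)) + (LINT x|lborel. norm (h'' x))"
  \<comment> \<open>Two integrations by parts give \<open>|t|\<^sup>2 |\<hat>h(t)| \<le> \<parallel>h''\<parallel>\<^sub>1\<close>.\<close>
  have "norm (fourier h t) * (1 + t^2) \<le> C" for t
  proof -
    have "fourier h'' t = - complex_of_real (t^2) * fourier h t"
      using fourier_derivative[OF h'(1) h''(1,2), of t] fourier_derivative[OF assms h'(1,2), of t]
      by (simp add: power2_eq_square algebra_simps)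
    then have "t^2 * norm (fourier h t) = norm (fourier h'' t)" by (simp add: norm_mult norm_power)
    also have "\<dots> \<le> (LINT x|lborel. norm (h'' x))" by (rule norm_fourier_le)
    finally have "norm (fourier h t) + t^2 * norm (fourier h t) \<le> C"
      using norm_fourier_le[of h t] unfolding C_def by linarith
    then show ?thesis by (simp add: algebra_simps)
  qed
  then have bound: "norm (fourier h t) \<le> C * inverse (1 + t^2)" for t
    by (simp add: field_simps add_pos_nonneg)
  show ?thesis
  proof (rule Bochner_Integration.integrable_bound)
    show "integrable lborel (\<lambda>t. C * inverse (1 + t^2))"
      using integrable_inverse_1_plus_square by (simp add: set_integrable_def)
    show "fourier h \<in> borel_measurable lborel"
      by (rule fourier_measurable[OF test_function1_continuous[OF assms]])
    have "C \<ge> 0" unfolding C_def by (simp add: integral_nonneg_AE)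
    then show "AE t in lborel. norm (fourier h t) \<le> norm (C * inverse (1 + t^2))"
      using bound by (intro AE_I2) (simp add: add_pos_nonneg)
  qed
qed

lemma test_function1_translate: "test_function1 h \<Longrightarrow> test_function1 (\<lambda>x. h (x - \<mu>))"
  unfolding test_function1_def
proof (elim conjE exE, intro conjI smooth_real_translate)
  fix R assume "\<forall>x. R \<le> \<bar>x\<bar> \<longrightarrow> h x = 0"
  then show "\<exists>R. \<forall>x. R \<le> \<bar>x\<bar> \<longrightarrow> h (x - \<mu>) = 0"
    by (intro exI[of _ "R + \<bar>\<mu>\<bar>"]) auto
qed

lemma test_function1_modulate: "test_function1 h \<Longrightarrow> test_function1 (\<lambda>x. iexp (\<xi> * x) * h x)"
  unfolding test_function1_def using smooth_real_modulate by auto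

lemma fourier_translate: "fourier (\<lambda>x. h (x - \<mu>)) t = iexp (t * \<mu>) * fourier h t"
proof -
  have "fourier (\<lambda>x. h (x - \<mu>)) t = (LINT x|lborel. iexp (t * (\<mu> + 1 * x)) * h (\<mu> + 1 * x - \<mu>))"
    unfolding fourier_def by (subst lborel_integral_real_affine[where c=1 and t=\<mu>]) simp_all
  also have "\<dots> = (LINT x|lborel. iexp (t * \<mu>) * (iexp (t * x) * h x))"
    by (simp add: algebra_simps exp_add[symmetric])
  finally show ?thesis unfolding fourier_def by simp
qed

lemma fourier_modulate: "fourier (\<lambda>x. iexp (\<xi> * x) * h x) t = fourier h (t + \<xi>)"
  unfolding fourier_def by (simp add: algebra_simps exp_add[symmetric])

lemma fourier_back_translate: "fourier_back (\<lambda>x. h (x - \<mu>)) a = fourier_back h (a - \<mu>)"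
  unfolding fourier_back_def phase_def fourier_translate by (simp add: algebra_simps exp_add[symmetric] exp_diff)

lemma fourier_back_modulate:
  "fourier_back (\<lambda>x. iexp (\<xi> * x) * h x) a = iexp (\<xi> * a) * fourier_back h a"
proof -
  have "fourier_back (\<lambda>x. iexp (\<xi> * x) * h x) a = (LINT t|lborel.
      exp (- \<i> * complex_of_real (-\<xi> + 1 * t) * complex_of_real a) * fourier h (-\<xi> + 1 * t + \<xi>))"
    unfolding fourier_back_def phase_def fourier_modulate
    by (subst lborel_integral_real_affine[where c=1 and t="-\<xi>"]) simp_all
  also have "\<dots> = (LINT t|lborel. iexp (\<xi> * a) * (exp (- \<i> * complex_of_real t * complex_of_real a) * fourier h t))"
    by (simp add: algebra_simps exp_add[symmetric])
  finally show ?thesis unfolding fourier_back_def phase_def by simp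
qed

lemma lborel_integral_swap_dominated:
  fixes f :: "real \<Rightarrow> real \<Rightarrow> complex" and a b :: "real \<Rightarrow> real"
  assumes meas: "(\<lambda>(x, y). f x y) \<in> borel_measurable (lborel \<Otimes>\<^sub>M lborel)"
    and ia: "integrable lborel a" and ib: "integrable lborel b"
    and bound: "\<And>x y. norm (f x y) \<le> a x * b y"
  shows "(LINT x|lborel. LINT y|lborel. f x y) = (LINT y|lborel. LINT x|lborel. f x y)"
proof -
  have [measurable]: "a \<in> borel_measurable borel" "b \<in> borel_measurable borel"
    using ia ib by auto
  have int_y: "integrable lborel (\<lambda>y. f x y)" for x
  proof (rule Bochner_Integration.integrable_bound)
    show "integrable lborel (\<lambda>y. a x * b y)" using ib by simp
    show "(\<lambda>y. f x y) \<in> borel_measurable lborel" using meas by measurable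
    show "AE y in lborel. norm (f x y) \<le> norm (a x * b y)"
      using bound by (auto intro!: AE_I2 order_trans[OF _ abs_ge_self])
  qed
  have "integrable (lborel \<Otimes>\<^sub>M lborel) (\<lambda>(x, y). f x y)"
  proof (rule lborel_pair.Fubini_integrable[OF meas])
    show "integrable lborel (\<lambda>x. LINT y|lborel. norm (case (x, y) of (x, y) \<Rightarrow> f x y))"
    proof (rule Bochner_Integration.integrable_bound)
      show "integrable lborel (\<lambda>x. a x * (LINT y|lborel. b y))" using ia by simp
      show "(\<lambda>x. LINT y|lborel. norm (case (x, y) of (x, y) \<Rightarrow> f x y)) \<in> borel_measurable lborel"
        using meas by measurable
      have "(LINT y|lborel. norm (f x y)) \<le> (LINT y|lborel. a x * b y)" for x
        by (rule integral_mono[OF integrable_norm[OF int_y]]) (use ib bound in auto)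
      then show "AE x in lborel. norm (LINT y|lborel. norm (case (x, y) of (x, y) \<Rightarrow> f x y))
          \<le> norm (a x * (LINT y|lborel. b y))"
        by (auto intro!: AE_I2 order_trans[OF _ abs_ge_self])
    qed
    show "AE x in lborel. integrable lborel (\<lambda>y. case (x, y) of (x, y) \<Rightarrow> f x y)"
      using int_y by simp
  qed
  then show ?thesis by (rule lborel_pair.Fubini_integral[symmetric])
qed

lemma fourier_gaussian:
  "(LINT s|lborel. of_real (exp (- (s^2) / 2)) * iexp (s * x)) = of_real (sqrt (2*pi) * exp (- (x^2) / 2))"
proof -
  have "(LINT s|lborel. std_normal_density s *\<^sub>R iexp (x * s)) = of_real (exp (- (x^2) / 2))"
    using fun_cong[OF char_std_normal_distribution, of x] unfolding char_def
    by (subst (asm) integral_density) (auto simp: normal_density_nonneg)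
  moreover have "(\<lambda>s. of_real (exp (- (s^2) / 2)) * iexp (s * x)) =
      (\<lambda>s. of_real (sqrt (2*pi)) * (std_normal_density s *\<^sub>R iexp (x * s)))"
    by (simp add: fun_eq_iff std_normal_density_def scaleR_conv_of_real mult.commute)
  ultimately show ?thesis by (simp only: integral_mult_right_zero) simp
qed

lemma integrable_gaussian: "integrable lborel (\<lambda>x::real. exp (- (x^2) / 2))"
proof -
  have "integrable lborel (\<lambda>x. sqrt (2*pi) * std_normal_density x)" by simp
  then show ?thesis by (simp add: std_normal_density_def)
qed

lemma integral_normal_density_fourier_back:
  assumes "test_function1 h"
  shows "(LINT l|lborel. of_real (std_normal_density l) * fourier_back h l) =
    (LINT t|lborel. of_real (exp (- (t^2) / 2)) * fourier h t)"
proof -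
  have [measurable]: "fourier h \<in> borel_measurable borel"
    using fourier_measurable[OF test_function1_continuous[OF assms]] by simp
  have char: "(LINT l|lborel. of_real (std_normal_density l) * exp (- \<i> * of_real t * of_real l)) =
      of_real (exp (- (t^2) / 2))" for t
    using fun_cong[OF char_std_normal_distribution, of "-t"] unfolding char_def
    by (subst (asm) integral_density) (auto simp: normal_density_nonneg scaleR_conv_of_real mult_ac)
  have "(LINT l|lborel. of_real (std_normal_density l) * fourier_back h l) = (LINT l|lborel. LINT t|lborel.
      of_real (std_normal_density l) * (exp (- \<i> * of_real t * of_real l) * fourier h t))"
    unfolding fourier_back_def phase_def by (simp only: integral_mult_right_zero)
  also have "\<dots> = (LINT t|lborel. LINT l|lborel.
      of_real (std_normal_density l) * (exp (- \<i> * of_real t * of_real l) * fourier h t))"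
    by (rule lborel_integral_swap_dominated[where a=std_normal_density and b="\<lambda>t. norm (fourier h t)"])
      (use integrable_fourier[OF assms] in \<open>auto simp: norm_mult normal_density_nonneg\<close>)
  also have "\<dots> = (LINT t|lborel. of_real (exp (- (t^2) / 2)) * fourier h t)"
    by (simp only: mult.assoc[symmetric] integral_mult_left_zero char)
  finally show ?thesis .
qed

lemma integral_gaussian_fourier:
  assumes "integrable lborel h"
  shows "(LINT t|lborel. of_real (exp (- (t^2) / 2)) * fourier h t) =
    of_real (sqrt (2*pi)) * (LINT x|lborel. of_real (exp (- (x^2) / 2)) * h x)"
proof -
  have [measurable]: "h \<in> borel_measurable borel" using assms by simp
  have "(LINT t|lborel. of_real (exp (- (t^2) / 2)) * fourier h t) =
      (LINT t|lborel. LINT x|lborel. of_real (exp (- (t^2) / 2)) * (iexp (t * x) * h x))"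
    unfolding fourier_def by (simp only: integral_mult_right_zero)
  also have "\<dots> = (LINT x|lborel. LINT t|lborel. of_real (exp (- (t^2) / 2)) * (iexp (t * x) * h x))"
    by (rule lborel_integral_swap_dominated[where a="\<lambda>t. exp (- (t^2) / 2)" and b="\<lambda>x. norm (h x)"])
      (use integrable_gaussian assms in \<open>auto simp: norm_mult\<close>)
  also have "\<dots> = (LINT x|lborel. of_real (sqrt (2*pi) * exp (- (x^2) / 2)) * h x)"
    by (simp only: mult.assoc[symmetric] integral_mult_left_zero fourier_gaussian)
  finally show ?thesis by (simp add: mult.assoc)
qed

lemma integral_gaussian_bump_pos: "(LINT x|lborel. exp (- (x^2) / 2) * bump 0 x) > 0"
proof -
  define F where "F x = exp (- (x^2) / 2) * bump 0 x" for x
  have [measurable]: "bump 0 \<in> borel_measurable borel"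
    by (rule borel_measurable_continuous_onI[OF continuous_on_bump])
  have F_nonneg: "F x \<ge> 0" for x unfolding F_def by (simp add: bump_nonneg)
  have "integrable lborel F"
  proof (rule Bochner_Integration.integrable_bound[OF integrable_gaussian])
    show "F \<in> borel_measurable lborel" unfolding F_def by measurable
    show "AE x in lborel. norm (F x) \<le> norm (exp (- (x^2) / 2))"
      using bump_0_le_1 bump_nonneg by (intro AE_I2) (simp add: F_def mult_right_le_one_le)
  qed
  moreover have "\<not> (AE x in lborel. F x = 0)"
  proof
    assume F0: "AE x in lborel. F x = 0"
    have "AE x in lborel. x \<notin> {0<..<1::real}"
    proof (rule eventually_mono[OF F0])
      fix x :: real assume "F x = 0"
      show "x \<notin> {0<..<1}"
      proof
        assume "x \<in> {0<..<1}"
        then have "F x > 0" using bump_pos[of x 0] by (simp add: F_def)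
        with \<open>F x = 0\<close> show False by simp
      qed
    qed
    from emeasure_eq_0_AE[OF this] have "emeasure lborel {0<..<1::real} = 0"
      by (simp add: greaterThanLessThan_def greaterThan_def lessThan_def Collect_conj_eq[symmetric])
    then show False by simp
  qed
  ultimately have "integral\<^sup>L lborel F \<noteq> 0"
    using integral_nonneg_eq_0_iff_AE[of lborel F] F_nonneg by auto
  moreover have "integral\<^sup>L lborel F \<ge> 0" using F_nonneg by (simp add: integral_nonneg_AE)
  ultimately show ?thesis unfolding F_def by simp
qed

lemma test_function1_std_bump: "test_function1 std_bump"
  unfolding test_function1_def using smooth_real_std_bump by (auto simp: std_bump_def bump_def intro!: exI[of _ 1])

lemma fourier_back_std_bump_nonzero: "\<exists>l. fourier_back std_bump l \<noteq> 0"
proof (rule ccontr)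
  assume "\<nexists>l. fourier_back std_bump l \<noteq> 0"
  then have "(LINT l|lborel. of_real (std_normal_density l) * fourier_back std_bump l) = 0"
    by simp
  moreover have "integrable lborel std_bump"
    by (rule integrable_lborel_vanishing[OF test_function1_continuous[OF test_function1_std_bump], of 1])
      (auto simp: std_bump_def bump_def)
  ultimately have "(LINT x|lborel. of_real (exp (- (x^2) / 2)) * std_bump x) = 0"
    using integral_normal_density_fourier_back[OF test_function1_std_bump] integral_gaussian_fourier
    by simp
  then have "complex_of_real (LINT x|lborel. exp (- (x^2) / 2) * bump 0 x) = 0"
    unfolding std_bump_def of_real_mult[symmetric] integral_complex_of_real .
  with integral_gaussian_bump_pos show False by simp
qed

section \<open>The KD distribution on product test functions\<close>

lemma lborel_vec2_product:
  fixes f g :: "real \<Rightarrow> complex"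
  assumes f: "integrable lborel f" and g: "integrable lborel g"
  shows "integrable lborel (\<lambda>x::real^2. f (x$1) * g (x$2))"
    and "(LINT x|(lborel::(real^2) measure). f (x$1) * g (x$2)) = (LINT x|lborel. f x) * (LINT x|lborel. g x)"
proof -
  interpret P: product_sigma_finite "\<lambda>_::real^2. lborel::real measure" by standard
  have basis: "(Basis :: (real^2) set) = {axis 1 1, axis 2 1}" "axis (1::2) (1::real) \<noteq> axis 2 1"
    unfolding Basis_vec_def by (auto simp: UNIV_2 axis_eq_axis)
  define F where "F b = (if b = axis 1 1 then f else g)" for b :: "real^2"
  define T where "T = (\<lambda>G::real^2 \<Rightarrow> real. \<Sum>b\<in>Basis. G b *\<^sub>R b)"
  have [measurable]: "f \<in> borel_measurable borel" "g \<in> borel_measurable borel" using f g by auto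
  have T_meas[measurable]: "T \<in> measurable (\<Pi>\<^sub>M b\<in>Basis. lborel) borel" unfolding T_def by measurable
  have fg_meas: "(\<lambda>x::real^2. f (x$1) * g (x$2)) \<in> borel_measurable borel" by measurable
  have "T G $ 1 = G (axis 1 1)" "T G $ 2 = G (axis 2 1)" for G
    unfolding T_def basis(1) using basis(2) by (auto simp: axis_def)
  then have product: "(\<lambda>G. f (T G $ 1) * g (T G $ 2)) = (\<lambda>G. \<Prod>b\<in>Basis. F b (G b))"
    unfolding basis(1) F_def using basis(2) by (auto simp: fun_eq_iff)
  show "integrable lborel (\<lambda>x::real^2. f (x$1) * g (x$2))"
    unfolding lborel_eq[where 'a="real^2"] T_def[symmetric] integrable_distr_eq[OF T_meas fg_meas]
    unfolding product by (rule P.product_integrable_prod) (auto simp: F_def f g)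
  have "(LINT x|(lborel::(real^2) measure). f (x$1) * g (x$2)) =
      integral\<^sup>L (\<Pi>\<^sub>M b\<in>Basis. lborel) (\<lambda>G. \<Prod>b\<in>Basis. F b (G b))"
    unfolding lborel_eq[where 'a="real^2"] T_def[symmetric] integral_distr[OF T_meas fg_meas] product ..
  also have "\<dots> = (\<Prod>b\<in>Basis. integral\<^sup>L lborel (F b))"
    by (rule P.product_integral_prod) (auto simp: F_def f g)
  finally show "(LINT x|(lborel::(real^2) measure). f (x$1) * g (x$2)) =
      (LINT x|lborel. f x) * (LINT x|lborel. g x)"
    unfolding basis(1) F_def using basis(2) by simp
qed

lemma test_function_tensor:
  assumes "test_function1 h" "test_function1 q"
  shows "test_function (\<lambda>x::real^2. h (x$1) * q (x$2))"
proof -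
  obtain R where R: "\<And>x. R \<le> \<bar>x\<bar> \<Longrightarrow> h x = 0" using test_function1_support[OF assms(1)] by blast
  obtain R' where R': "\<And>x. R' \<le> \<bar>x\<bar> \<Longrightarrow> q x = 0" using test_function1_support[OF assms(2)] by blast
  have "h (x$1) * q (x$2) = 0" if "R + R' < norm x" for x :: "real^2"
  proof (rule ccontr)
    assume "h (x$1) * q (x$2) \<noteq> 0"
    then have "\<bar>x$1\<bar> < R" "\<bar>x$2\<bar> < R'" using R R' by (auto simp: not_le[symmetric])
    moreover have "norm x \<le> \<bar>x$1\<bar> + \<bar>x$2\<bar>" using norm_le_l1_cart[of x] by (simp add: sum_2)
    ultimately show False using that by linarith
  qed
  moreover have "smooth_fun (\<lambda>x::real^2. h (x$1) * q (x$2))"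
    unfolding smooth_fun_def using Ck_fun_tensor assms unfolding test_function1_def by blast
  ultimately show ?thesis unfolding test_function_def by blast
qed

lemma trace_spectral_product:
  "trace ((mat_scale u1 P1 + mat_scale u2 P2) ** (mat_scale v1 Q1 + mat_scale v2 Q2) ** \<rho>) =
      u1 * v1 * trace (P1 ** Q1 ** \<rho>) + u1 * v2 * trace (P1 ** Q2 ** \<rho>)
    + u2 * v1 * trace (P2 ** Q1 ** \<rho>) + u2 * v2 * trace (P2 ** Q2 ** \<rho>)"
  by (simp add: matrix_add_rdistrib matrix_add_ldistrib mat_scale_mult_left mat_scale_mult_right
      trace_add trace_mat_scale mat_scale_mat_scale algebra_simps)

lemma KD_char_spectral:
  assumes "A ** P1 = mat_scale (of_real a1) P1" "A ** P2 = mat_scale (of_real a2) P2" "P1 + P2 = mat 1"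
    and "B ** Q1 = mat_scale (of_real b1) Q1" "B ** Q2 = mat_scale (of_real b2) Q2" "Q1 + Q2 = mat 1"
  shows "KD_char A B \<rho> s =
      phase (s$1) a1 * phase (s$2) b1 * trace (P1 ** Q1 ** \<rho>)
    + phase (s$1) a1 * phase (s$2) b2 * trace (P1 ** Q2 ** \<rho>)
    + phase (s$1) a2 * phase (s$2) b1 * trace (P2 ** Q1 ** \<rho>)
    + phase (s$1) a2 * phase (s$2) b2 * trace (P2 ** Q2 ** \<rho>)"
  unfolding KD_char_def mat_exp_mat_scale_spectral[OF assms(1-3)] mat_exp_mat_scale_spectral[OF assms(4-6)]
    trace_spectral_product phase_def
  by (simp add: mult.assoc)

lemma integrable_phase_mult_fourier:
  assumes "test_function1 h"
  shows "integrable lborel (\<lambda>t. phase t a * fourier h t)"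
proof (rule Bochner_Integration.integrable_bound[OF integrable_fourier[OF assms]])
  have [measurable]: "fourier h \<in> borel_measurable borel"
    using fourier_measurable[OF test_function1_continuous[OF assms]] by simp
  show "(\<lambda>t. phase t a * fourier h t) \<in> borel_measurable lborel" unfolding phase_def by measurable
  have "norm (phase t a) = 1" for t
    using norm_exp_i_times[of "- t * a"] unfolding phase_def by (simp add: algebra_simps)
  then show "AE t in lborel. norm (phase t a * fourier h t) \<le> norm (fourier h t)"
    by (intro AE_I2) (simp add: norm_mult)
qed

lemma KD_dist_tensor:
  assumes "A ** P1 = mat_scale (of_real a1) P1" "A ** P2 = mat_scale (of_real a2) P2" "P1 + P2 = mat 1"
    and "B ** Q1 = mat_scale (of_real b1) Q1" "B ** Q2 = mat_scale (of_real b2) Q2" "Q1 + Q2 = mat 1"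
    and h: "test_function1 h" and q: "test_function1 q"
  shows "KD_dist A B \<rho> (\<lambda>x. h (x$1) * q (x$2)) = of_real (1 / (2 * pi)^2) *
     (fourier_back h a1 * fourier_back q b1 * trace (P1 ** Q1 ** \<rho>)
    + fourier_back h a1 * fourier_back q b2 * trace (P1 ** Q2 ** \<rho>)
    + fourier_back h a2 * fourier_back q b1 * trace (P2 ** Q1 ** \<rho>)
    + fourier_back h a2 * fourier_back q b2 * trace (P2 ** Q2 ** \<rho>))"
proof -
  have inner: "(LINT x|lborel. iexp (s \<bullet> x) * (h (x$1) * q (x$2))) = fourier h (s$1) * fourier q (s$2)"
    for s :: "real^2"
  proof -
    have "(\<lambda>x::real^2. iexp (s \<bullet> x) * (h (x$1) * q (x$2))) =
        (\<lambda>x. (iexp (s$1 * x$1) * h (x$1)) * (iexp (s$2 * x$2) * q (x$2)))"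
      by (simp add: inner_vec_def sum_2 algebra_simps exp_add[symmetric])
    then show ?thesis unfolding fourier_def
      using lborel_vec2_product(2)[OF integrable_iexp_mult_test_function1[OF h]
          integrable_iexp_mult_test_function1[OF q]] by simp
  qed
  define T where "T a b s = (phase (s$1) a * fourier h (s$1)) * (phase (s$2) b * fourier q (s$2))"
    for a b and s :: "real^2"
  have "integrable lborel (T a b)" "(LINT s|lborel. T a b s) = fourier_back h a * fourier_back q b" for a b
    unfolding T_def fourier_back_def
    using lborel_vec2_product[OF integrable_phase_mult_fourier[OF h] integrable_phase_mult_fourier[OF q]]
    by simp_all
  moreover have "(\<lambda>s. KD_char A B \<rho> s * (LINT x|lborel. iexp (s \<bullet> x) * (h (x$1) * q (x$2)))) =
      (\<lambda>s. trace (P1 ** Q1 ** \<rho>) * T a1 b1 s + trace (P1 ** Q2 ** \<rho>) * T a1 b2 s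
         + trace (P2 ** Q1 ** \<rho>) * T a2 b1 s + trace (P2 ** Q2 ** \<rho>) * T a2 b2 s)"
    unfolding inner KD_char_spectral[OF assms(1-6)] T_def by (simp add: fun_eq_iff algebra_simps)
  ultimately show ?thesis unfolding KD_dist_def by (simp add: algebra_simps)
qed

definition wave_packet :: "real \<Rightarrow> real \<Rightarrow> real \<Rightarrow> complex" where
  "wave_packet \<xi> \<mu> x = iexp (\<xi> * x) * std_bump (x - \<mu>)"

lemma test_function1_wave_packet: "test_function1 (wave_packet \<xi> \<mu>)"
  unfolding wave_packet_def[abs_def]
  by (intro test_function1_modulate test_function1_translate test_function1_std_bump)

lemma fourier_back_wave_packet:
  "fourier_back (wave_packet \<xi> \<mu>) a = iexp (\<xi> * a) * fourier_back std_bump (a - \<mu>)"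
  unfolding wave_packet_def[abs_def] fourier_back_modulate fourier_back_translate ..

lemma wave_packet_coeffs_eq_0:
  assumes "a1 \<noteq> a2"
    and "\<And>\<xi> \<mu>. fourier_back (wave_packet \<xi> \<mu>) a1 * x1 + fourier_back (wave_packet \<xi> \<mu>) a2 * x2 = 0"
  shows "x1 = 0 \<and> x2 = 0"
proof -
  obtain l where l: "fourier_back std_bump l \<noteq> 0" using fourier_back_std_bump_nonzero by blast
  have "x1 = 0" if "a1 \<noteq> a2"
    and H: "\<And>\<xi> \<mu>. fourier_back (wave_packet \<xi> \<mu>) a1 * x1 + fourier_back (wave_packet \<xi> \<mu>) a2 * x2 = 0"
    for a1 a2 x1 x2
  proof -
    define K where "K = fourier_back std_bump (a2 - (a1 - l))"
    \<comment> \<open>Centre the packet so that \<open>a\<^sub>1\<close> sees the value at \<open>l\<close>, and compare the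
        frequencies \<open>0\<close> and \<open>\<pi> / (a\<^sub>1 - a\<^sub>2)\<close>, at which the two phases differ by a sign.\<close>
    have "x1 * fourier_back std_bump l + x2 * K = 0"
      using H[of 0 "a1 - l"] unfolding fourier_back_wave_packet K_def by (simp add: mult.commute)
    moreover
    define \<xi> where "\<xi> = pi / (a1 - a2)"
    have "\<xi> * a1 = \<xi> * a2 + pi" unfolding \<xi>_def using that(1) by (simp add: field_simps)
    then have "iexp (\<xi> * a1) = - iexp (\<xi> * a2)" by (simp add: distrib_left exp_add)
    then have "iexp (\<xi> * a2) * (- x1 * fourier_back std_bump l + x2 * K) = 0"
      using H[of \<xi> "a1 - l"] unfolding fourier_back_wave_packet K_def by (simp add: algebra_simps)
    then have "- x1 * fourier_back std_bump l + x2 * K = 0" by simp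
    ultimately show "x1 = 0" using l by (simp add: algebra_simps)
  qed
  from this[OF assms] this[of a2 a1 x2 x1] assms show ?thesis by (simp add: add.commute)
qed

lemma KD_dist_eq_imp_spectral_traces_eq:
  fixes A B \<rho> \<rho>' P1 P2 Q1 Q2 :: "complex^2^2"
  assumes "a1 \<noteq> a2" "A ** P1 = mat_scale (of_real a1) P1" "A ** P2 = mat_scale (of_real a2) P2"
      "P1 + P2 = mat 1"
    and "b1 \<noteq> b2" "B ** Q1 = mat_scale (of_real b1) Q1" "B ** Q2 = mat_scale (of_real b2) Q2"
      "Q1 + Q2 = mat 1"
    and eq: "\<forall>\<phi>::real^2 \<Rightarrow> complex. test_function \<phi> \<longrightarrow> KD_dist A B \<rho> \<phi> = KD_dist A B \<rho>' \<phi>"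
  shows "X \<in> {P1, P2} \<Longrightarrow> Y \<in> {Q1, Q2} \<Longrightarrow> trace (X ** Y ** \<rho>) = trace (X ** Y ** \<rho>')"
proof -
  define d where "d X Y = trace (X ** Y ** \<rho>) - trace (X ** Y ** \<rho>')" for X Y :: "complex^2^2"
  have tensor: "fourier_back h a1 * (d P1 Q1 * fourier_back q b1 + d P1 Q2 * fourier_back q b2)
      + fourier_back h a2 * (d P2 Q1 * fourier_back q b1 + d P2 Q2 * fourier_back q b2) = 0"
    if "test_function1 h" "test_function1 q" for h q
  proof -
    have "KD_dist A B \<rho> (\<lambda>x. h (x$1) * q (x$2)) - KD_dist A B \<rho>' (\<lambda>x. h (x$1) * q (x$2)) = 0"
      using eq test_function_tensor[OF that] by simp
    moreover have "KD_dist A B \<rho> (\<lambda>x. h (x$1) * q (x$2)) - KD_dist A B \<rho>' (\<lambda>x. h (x$1) * q (x$2)) =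
        of_real (1 / (2 * pi)^2) *
        (fourier_back h a1 * (d P1 Q1 * fourier_back q b1 + d P1 Q2 * fourier_back q b2)
        + fourier_back h a2 * (d P2 Q1 * fourier_back q b1 + d P2 Q2 * fourier_back q b2))"
      unfolding KD_dist_tensor[OF assms(2-4,6-8) that] d_def by (simp add: algebra_simps)
    ultimately show ?thesis by simp
  qed
  have "d P1 Q1 * fourier_back q b1 + d P1 Q2 * fourier_back q b2 = 0 \<and>
      d P2 Q1 * fourier_back q b1 + d P2 Q2 * fourier_back q b2 = 0" if "test_function1 q" for q
    using wave_packet_coeffs_eq_0[OF assms(1) tensor[OF test_function1_wave_packet that]] .
  then have "d P1 Q1 = 0 \<and> d P1 Q2 = 0" "d P2 Q1 = 0 \<and> d P2 Q2 = 0"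
    using test_function1_wave_packet
    by (auto intro!: wave_packet_coeffs_eq_0[OF assms(5)] simp: mult.commute)
  then show "X \<in> {P1, P2} \<Longrightarrow> Y \<in> {Q1, Q2} \<Longrightarrow> trace (X ** Y ** \<rho>) = trace (X ** Y ** \<rho>')"
    unfolding d_def by auto
qed

theorem proposition5:
  fixes A B \<rho> \<rho>' :: "complex^2^2"
  assumes "hermitian_mat A" and "hermitian_mat B" and "A ** B \<noteq> B ** A"
    and "density_operator \<rho>" and "density_operator \<rho>'"
  shows "\<rho> = \<rho>' \<longleftrightarrow>
    (\<forall>\<phi>::real^2 \<Rightarrow> complex. test_function \<phi> \<longrightarrow> KD_dist A B \<rho> \<phi> = KD_dist A B \<rho>' \<phi>)"
proof
  assume eq: "\<forall>\<phi>::real^2 \<Rightarrow> complex. test_function \<phi> \<longrightarrow> KD_dist A B \<rho> \<phi> = KD_dist A B \<rho>' \<phi>"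
  obtain a1 a2 P1 P2 where A: "a1 \<noteq> a2" "A ** P1 = mat_scale (of_real a1) P1"
      "A ** P2 = mat_scale (of_real a2) P2" "P1 + P2 = mat 1"
      "A = mat_scale (of_real a1) P1 + mat_scale (of_real a2) P2"
    using hermitian2_spectral_decomposition[OF assms(1,3)] by blast
  obtain b1 b2 Q1 Q2 where B: "b1 \<noteq> b2" "B ** Q1 = mat_scale (of_real b1) Q1"
      "B ** Q2 = mat_scale (of_real b2) Q2" "Q1 + Q2 = mat 1"
      "B = mat_scale (of_real b1) Q1 + mat_scale (of_real b2) Q2"
    using hermitian2_spectral_decomposition[OF assms(2)] assms(3) by metis
  show "\<rho> = \<rho>'"
    by (rule density_operator_eq_if_spectral_traces_eq[OF assms A(5,4) B(5,4)])
      (rule KD_dist_eq_imp_spectral_traces_eq[OF A(1-4) B(1-4) eq])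
qed simp

end
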